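(* If $G$ is a finite group, then the group $\mathrm{Gr}(\mathrm{Pq}(G))$ is finite.
   Context: For a group $G$, $\mathrm{Pq}(G)$ is the power quandle on the underlying set of $G$ with $a\rhd b=aba^{-1}$, $\pi^n(a)=a^n$ ($n\in\mathbb{Z}$), and unit the identity $e$. $\mathrm{Gr}(\mathrm{Pq}(G))$ is the group with generators $\sigma(a)$, $a\in G$, and relations $\sigma(aba^{-1})=\sigma(a)\sigma(b)\sigma(a)^{-1}$, $\sigma(a^n)=\sigma(a)^n$, $\sigma(e)=1$ for all $a,b\in G$, $n\in\mathbb{Z}$. *)

theory Defs
  imports "HOL-Algebra.Group"
begin

text \<open>A letter (a, True) stands for sigma(a), a letter
  (a, False) for sigma(a)^-1; words are lists of letters with a in carrier G.
  pq_rel G is the congruence on words generated by free cancellation and the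
  defining relations of Gr(Pq(G)).\<close>

definition sigma_pow :: "'a \<Rightarrow> int \<Rightarrow> ('a \<times> bool) list" where
  "sigma_pow a n = (if 0 \<le> n then replicate (nat n) (a, True) else replicate (nat (- n)) (a, False))"

definition pq_words :: "('a, 'b) monoid_scheme \<Rightarrow> ('a \<times> bool) list set" where
  "pq_words G = lists (carrier G \<times> UNIV)"

inductive_set pq_rel :: "('a, 'b) monoid_scheme \<Rightarrow> (('a \<times> bool) list \<times> ('a \<times> bool) list) set"
  for G where
  refl: "w \<in> pq_words G \<Longrightarrow> (w, w) \<in> pq_rel G"
| sym: "(u, v) \<in> pq_rel G \<Longrightarrow> (v, u) \<in> pq_rel G"
| trans: "(u, v) \<in> pq_rel G \<Longrightarrow> (v, w) \<in> pq_rel G \<Longrightarrow> (u, w) \<in> pq_rel G"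
| cong: "(u, v) \<in> pq_rel G \<Longrightarrow> x \<in> pq_words G \<Longrightarrow> y \<in> pq_words G
          \<Longrightarrow> (x @ u @ y, x @ v @ y) \<in> pq_rel G"
| cancel: "a \<in> carrier G \<Longrightarrow> ([(a, b), (a, \<not> b)], []) \<in> pq_rel G"
| conj: "a \<in> carrier G \<Longrightarrow> b \<in> carrier G \<Longrightarrow>
          ([(a \<otimes>\<^bsub>G\<^esub> b \<otimes>\<^bsub>G\<^esub> inv\<^bsub>G\<^esub> a, True)], [(a, True), (b, True), (a, False)]) \<in> pq_rel G"
| power: "a \<in> carrier G \<Longrightarrow> ([(a [^]\<^bsub>G\<^esub> (n::int), True)], sigma_pow a n) \<in> pq_rel G"
| unit: "([(\<one>\<^bsub>G\<^esub>, True)], []) \<in> pq_rel G"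

definition GrPq :: "('a, 'b) monoid_scheme \<Rightarrow> ('a \<times> bool) list set monoid" where
  "GrPq G = \<lparr> carrier = pq_words G // pq_rel G,
             mult = (\<lambda>X Y. \<Union>{pq_rel G `` {x @ y} | x y. x \<in> X \<and> y \<in> Y}),
             one = pq_rel G `` {[]} \<rparr>"

end

theory Submission
  imports Defs "HOL-Algebra.Multiplicative_Group"
begin

text \<open>Since \<open>\<sigma>(a)\<^sup>-\<^sup>1 = \<sigma>(a\<^sup>-\<^sup>1)\<close>, every element of Gr(Pq(G)) is a product of
  generators \<open>\<sigma>(a)\<close>. The conjugation relation lets a generator move to the right past another,
  \<open>\<sigma>(b) \<sigma>(c) = \<sigma>(c) \<sigma>(c\<^sup>-\<^sup>1 b c)\<close>, at the price of being conjugated. In a positive word of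
  length at least \<open>|G|\<^sup>2\<close> some generator \<open>\<sigma>(c)\<close> occurs at least \<open>|G|\<close> times; moving these
  occurrences to the front produces \<open>\<sigma>(c)\<^bsup>|G|\<^esup> = \<sigma>(c\<^bsup>|G|\<^esup>) = \<sigma>(1) = 1\<close>, which can be deleted.
  Hence every element is represented by a positive word of length less than \<open>|G|\<^sup>2\<close>.\<close>

definition positive_words :: "('a, 'b) monoid_scheme \<Rightarrow> ('a \<times> bool) list set" where
  "positive_words G = lists (carrier G \<times> {True})"

lemma positive_words_subset_pq_words: "positive_words G \<subseteq> pq_words G"
  by (auto simp: positive_words_def pq_words_def)

lemma pq_rel_append_left:
  "(u, v) \<in> pq_rel G \<Longrightarrow> x \<in> pq_words G \<Longrightarrow> (x @ u, x @ v) \<in> pq_rel G"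
  using pq_rel.cong[of u v G x "[]"] by (simp add: pq_words_def)

lemma pq_rel_append_right:
  "(u, v) \<in> pq_rel G \<Longrightarrow> y \<in> pq_words G \<Longrightarrow> (u @ y, v @ y) \<in> pq_rel G"
  using pq_rel.cong[of u v G "[]" y] by (simp add: pq_words_def)

lemma pq_rel_Image_eq: "(w, v) \<in> pq_rel G \<Longrightarrow> pq_rel G `` {w} = pq_rel G `` {v}"
  using pq_rel.sym pq_rel.trans by blast

lemma pigeonhole_count_list:
  assumes "set w \<subseteq> X" "finite X" "X \<noteq> {}" "card X * m \<le> length w"
  shows "\<exists>x\<in>X. m \<le> count_list w x"
proof (rule ccontr)
  assume "\<not> ?thesis"
  then have "sum (count_list w) X < (\<Sum>x\<in>X. m)"
    using sum_strict_mono[OF assms(2,3)] by (metis not_le)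
  then show False
    using assms by (simp add: sum_count_set)
qed

context group
begin

lemma pq_rel_inverse_letter: "a \<in> carrier G \<Longrightarrow> ([(a, False)], [(inv a, True)]) \<in> pq_rel G"
  using pq_rel.power[of a G "-1"]
  by (auto simp: sigma_pow_def int_pow_neg intro: pq_rel.sym)

lemma ex_positive_word_pq_rel:
  "w \<in> pq_words G \<Longrightarrow> \<exists>v\<in>positive_words G. (w, v) \<in> pq_rel G"
proof (induction w)
  case Nil
  then show ?case
    using pq_rel.refl[of "[]" G] by (auto simp: positive_words_def)
next
  case (Cons l w)
  obtain a b where l: "l = (a, b)" by force
  with Cons.prems have a: "a \<in> carrier G" and w: "w \<in> pq_words G"
    by (auto simp: pq_words_def)
  obtain v where v: "v \<in> positive_words G" "(w, v) \<in> pq_rel G"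
    using Cons.IH[OF w] by blast
  have "(l # w, l # v) \<in> pq_rel G"
    using pq_rel_append_left[OF v(2), of "[l]"] a l by (simp add: pq_words_def)
  moreover have "(l # v, (if b then a else inv a, True) # v) \<in> pq_rel G"
    using pq_rel_append_right[OF pq_rel_inverse_letter[OF a], of v]
      pq_rel.refl[of "l # v" G] v(1) positive_words_subset_pq_words a l
    by (cases b) (auto simp: pq_words_def)
  ultimately show ?case
    using v(1) a by (intro bexI[of _ "(if b then a else inv a, True) # v"])
      (auto intro: pq_rel.trans simp: positive_words_def)
qed

lemma pq_rel_swap_letters:
  assumes b: "b \<in> carrier G" and c: "c \<in> carrier G"
  shows "([(b, True), (c, True)], [(c, True), (inv c \<otimes> b \<otimes> c, True)]) \<in> pq_rel G"
proof -
  define b' where "b' = inv c \<otimes> b \<otimes> c"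
  have b': "b' \<in> carrier G" using b c by (simp add: b'_def)
  have "c \<otimes> (inv c \<otimes> b) = b" using b c by (simp add: m_assoc[symmetric])
  then have "c \<otimes> b' \<otimes> inv c = b" using b c by (simp add: b'_def m_assoc)
  then have "([(b, True)], [(c, True), (b', True), (c, False)]) \<in> pq_rel G"
    using pq_rel.conj[OF c b'] by simp
  from pq_rel_append_right[OF this, of "[(c, True)]"]
  have "([(b, True), (c, True)], [(c, True), (b', True)] @ [(c, False), (c, True)]) \<in> pq_rel G"
    using c by (simp add: pq_words_def)
  moreover have "([(c, True), (b', True)] @ [(c, False), (c, True)], [(c, True), (b', True)])
      \<in> pq_rel G"
    using pq_rel_append_left[OF pq_rel.cancel[OF c, of False], of "[(c, True), (b', True)]"] c b'
    by (simp add: pq_words_def)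
  ultimately show ?thesis
    unfolding b'_def by (blast intro: pq_rel.trans)
qed

lemma letter_passes_positive_word:
  "a \<in> carrier G \<Longrightarrow> v \<in> positive_words G \<Longrightarrow>
    \<exists>a'\<in>carrier G. ((a, True) # v, v @ [(a', True)]) \<in> pq_rel G"
proof (induction v arbitrary: a)
  case Nil
  then show ?case
    using pq_rel.refl[of "[(a, True)]" G] by (auto simp: pq_words_def)
next
  case (Cons l v)
  obtain c where l: "l = (c, True)" and c: "c \<in> carrier G" and v: "v \<in> positive_words G"
    using Cons.prems(2) by (auto simp: positive_words_def)
  have a1: "inv c \<otimes> a \<otimes> c \<in> carrier G" using Cons.prems(1) c by simp
  obtain a' where a': "a' \<in> carrier G"
    "((inv c \<otimes> a \<otimes> c, True) # v, v @ [(a', True)]) \<in> pq_rel G"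
    using Cons.IH[OF a1 v] by blast
  have moved: "((a, True) # l # v, l # (inv c \<otimes> a \<otimes> c, True) # v) \<in> pq_rel G"
    using pq_rel_append_right[OF pq_rel_swap_letters[OF Cons.prems(1) c], of v]
      subsetD[OF positive_words_subset_pq_words v] l by simp
  have pass: "(l # (inv c \<otimes> a \<otimes> c, True) # v, l # v @ [(a', True)]) \<in> pq_rel G"
    using pq_rel_append_left[OF a'(2), of "[l]"] c l by (simp add: pq_words_def)
  show ?case
    using pq_rel.trans[OF moved pass] a'(1) by auto
qed

lemma pq_rel_collect_letter:
  "w \<in> positive_words G \<Longrightarrow> c \<in> carrier G \<Longrightarrow> k \<le> count_list w (c, True) \<Longrightarrow>
    \<exists>r\<in>positive_words G. length r + k = length w \<and>
      (w, replicate k (c, True) @ r) \<in> pq_rel G"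
proof (induction w arbitrary: k)
  case Nil
  then show ?case
    using pq_rel.refl[of "[]" G] by (auto simp: positive_words_def pq_words_def)
next
  case (Cons l w)
  obtain a where l: "l = (a, True)" and a: "a \<in> carrier G" and w: "w \<in> positive_words G"
    using Cons.prems(1) by (auto simp: positive_words_def)
  have lw: "[l] \<in> pq_words G" using a l by (simp add: pq_words_def)
  show ?case
  proof (cases "a = c \<and> k > 0")
    case True
    then obtain k' where k: "k = Suc k'" "k' \<le> count_list w (c, True)"
      using Cons.prems(3) l gr0_implies_Suc by fastforce
    obtain r where r: "r \<in> positive_words G" "length r + k' = length w"
      "(w, replicate k' (c, True) @ r) \<in> pq_rel G"
      using Cons.IH[OF w Cons.prems(2) k(2)] by blast
    show ?thesis
      using pq_rel_append_left[OF r(3) lw] r(1,2) k(1) True l by auto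
  next
    case False
    then have "k \<le> count_list w (c, True)"
      using Cons.prems(3) l by (auto split: if_splits)
    then obtain r where r: "r \<in> positive_words G" "length r + k = length w"
      "(w, replicate k (c, True) @ r) \<in> pq_rel G"
      using Cons.IH[OF w Cons.prems(2)] by blast
    obtain a' where a': "a' \<in> carrier G"
      "((a, True) # replicate k (c, True), replicate k (c, True) @ [(a', True)]) \<in> pq_rel G"
      using letter_passes_positive_word[OF a, of "replicate k (c, True)"] Cons.prems(2)
      by (auto simp: positive_words_def in_lists_conv_set)
    have collected: "(l # w, l # replicate k (c, True) @ r) \<in> pq_rel G"
      using pq_rel_append_left[OF r(3) lw] by simp
    have passed: "(l # replicate k (c, True) @ r, replicate k (c, True) @ (a', True) # r)
        \<in> pq_rel G"
      using pq_rel_append_right[OF a'(2), of r] subsetD[OF positive_words_subset_pq_words r(1)] l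
      by simp
    show ?thesis
      using pq_rel.trans[OF collected passed] r(1,2) a'(1)
      by (intro bexI[of _ "(a', True) # r"]) (auto simp: positive_words_def)
  qed
qed

lemma pq_rel_replicate_Nil:
  assumes "c \<in> carrier G" and "c [^] n = \<one>"
  shows "(replicate n (c, True), []) \<in> pq_rel G"
proof -
  have "([(\<one>, True)], replicate n (c, True)) \<in> pq_rel G"
    using pq_rel.power[OF assms(1), of "int n"] assms(2) by (simp add: sigma_pow_def int_pow_int)
  then show ?thesis
    using pq_rel.unit pq_rel.sym pq_rel.trans by blast
qed

lemma ex_shorter_positive_word_pq_rel:
  assumes fin: "finite (carrier G)"
    and w: "w \<in> positive_words G" and long: "order G * order G \<le> length w"
  shows "\<exists>r\<in>positive_words G. length r < length w \<and> (w, r) \<in> pq_rel G"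
proof -
  have "card (carrier G \<times> {True}) * order G \<le> length w"
    using long by (simp add: card_cartesian_product order_def)
  then have "\<exists>l\<in>carrier G \<times> {True}. order G \<le> count_list w l"
    using w fin by (intro pigeonhole_count_list) (auto simp: positive_words_def)
  then obtain c where c: "c \<in> carrier G" "order G \<le> count_list w (c, True)" by blast
  obtain r where r: "r \<in> positive_words G" "length r + order G = length w"
    "(w, replicate (order G) (c, True) @ r) \<in> pq_rel G"
    using pq_rel_collect_letter[OF w c] by blast
  have "(replicate (order G) (c, True) @ r, r) \<in> pq_rel G"
    using pq_rel_append_right[OF pq_rel_replicate_Nil[OF c(1) pow_order_eq_1[OF c(1)]], of r]
      subsetD[OF positive_words_subset_pq_words r(1)] by simp
  then have "(w, r) \<in> pq_rel G"
    using pq_rel.trans[OF r(3)] by blast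
  moreover have "0 < order G" using fin order_gt_0_iff_finite by blast
  ultimately show ?thesis
    using r(1,2) by (intro bexI[of _ r]) auto
qed

lemma ex_short_positive_word_pq_rel:
  assumes fin: "finite (carrier G)" and w: "w \<in> pq_words G"
  shows "\<exists>v\<in>positive_words G. length v < order G * order G \<and> (w, v) \<in> pq_rel G"
proof -
  have "\<exists>v\<in>positive_words G. length v < order G * order G \<and> (u, v) \<in> pq_rel G"
    if "u \<in> positive_words G" for u
    using that
  proof (induction "length u" arbitrary: u rule: less_induct)
    case less
    show ?case
    proof (cases "length u < order G * order G")
      case True
      then show ?thesis
        using less.prems pq_rel.refl positive_words_subset_pq_words by blast
    next
      case False
      then obtain r where r: "r \<in> positive_words G" "length r < length u" "(u, r) \<in> pq_rel G"
        using ex_shorter_positive_word_pq_rel[OF fin less.prems] by auto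
      then obtain v where "v \<in> positive_words G" "length v < order G * order G" "(r, v) \<in> pq_rel G"
        using less.hyps by blast
      then show ?thesis
        using pq_rel.trans[OF r(3)] by blast
    qed
  qed
  moreover obtain u where "u \<in> positive_words G" "(w, u) \<in> pq_rel G"
    using ex_positive_word_pq_rel[OF w] by blast
  ultimately show ?thesis
    using pq_rel.trans by blast
qed

end

theorem mainTheorem12:
  fixes G :: "('a, 'b) monoid_scheme"
  assumes "group G" and "finite (carrier G)"
  shows "finite (carrier (GrPq G))"
proof -
  interpret group G by fact
  define V where "V = {v \<in> positive_words G. length v \<le> order G * order G}"
  have "finite V"
    unfolding V_def positive_words_def lists_eq_set using assms(2)
    by (simp add: finite_lists_length_le)
  moreover have "carrier (GrPq G) \<subseteq> (\<lambda>v. pq_rel G `` {v}) ` V"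
  proof
    fix X assume "X \<in> carrier (GrPq G)"
    then obtain w where w: "w \<in> pq_words G" and X: "X = pq_rel G `` {w}"
      by (auto simp: GrPq_def quotient_def)
    obtain v where "v \<in> positive_words G" "length v < order G * order G" "(w, v) \<in> pq_rel G"
      using ex_short_positive_word_pq_rel[OF assms(2) w] by blast
    then have "v \<in> V" "(w, v) \<in> pq_rel G"
      by (simp_all add: V_def)
    then show "X \<in> (\<lambda>v. pq_rel G `` {v}) ` V"
      using X pq_rel_Image_eq by blast
  qed
  ultimately show ?thesis
    using finite_subset finite_imageI by blast
qed

end
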